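(* Let $T=\{0,\dots,N\}$, and let $M'_\bullet, M''_\bullet\subseteq M_\bullet$ be filtrations of finite-dimensional vector spaces over a field $\mathbb{F}$ indexed by $T$ (i.e. $M'_t,M''_t\subseteq M_t$ for all $t$). Let $\mathfrak{M}'$ and $\mathfrak{M}''$ be filtration compatible bases for $M'_\bullet$ and $M''_\bullet$ respectively, such that $\mathfrak{M}'\cup\mathfrak{M}''$ is linearly independent. Then $\mathfrak{M}'\cap\mathfrak{M}''$ is a filtration compatible basis for the filtration $M'_\bullet\cap M''_\bullet$ given by $(M'_\bullet\cap M''_\bullet)_t=M'_t\cap M''_t$. Moreover, for all $m\in\mathfrak{M}'\cap\mathfrak{M}''$, \[ \operatorname{supp}_{M'_\bullet\cap M''_\bullet}(m)=\operatorname{supp}_{M'_\bullet}(m)\cap\operatorname{supp}_{M''_\bullet}(m). \]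
   Context: A filtration of a vector space $M$ indexed by $T=\{0,\dots,N\}$ is a family of subspaces $M_0\subseteq M_1\subseteq\dots\subseteq M_N=M$, with structure maps the inclusions. For $m\in M_N$, its support is $\operatorname{supp}_{M_\bullet}(m)=\{t\in T\mid m\in M_t\}$. A basis $\mathfrak{M}$ of $M_N$ is filtration compatible if $\mathfrak{M}\cap M_t$ is a basis of $M_t$ for every $t\in T$. *)

theory Defs
  imports Main "HOL.Vector_Spaces"
begin

text \<open>Vector spaces over a field are represented by a scalar multiplication
  scale :: 'a::field \<Rightarrow> 'b \<Rightarrow> 'b satisfying the locale vector_space.\<close>

definition is_filtration :: "('a::field \<Rightarrow> 'b::ab_group_add \<Rightarrow> 'b) \<Rightarrow> nat \<Rightarrow> (nat \<Rightarrow> 'b set) \<Rightarrow> bool" where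
  "is_filtration scale N M \<longleftrightarrow>
     (\<forall>t\<le>N. module.subspace scale (M t)) \<and> (\<forall>s t. s \<le> t \<longrightarrow> t \<le> N \<longrightarrow> M s \<subseteq> M t)"

definition is_basis_of :: "('a::field \<Rightarrow> 'b::ab_group_add \<Rightarrow> 'b) \<Rightarrow> 'b set \<Rightarrow> 'b set \<Rightarrow> bool" where
  "is_basis_of scale B S \<longleftrightarrow> B \<subseteq> S \<and> \<not> module.dependent scale B \<and> module.span scale B = S"

definition filt_compat_basis :: "('a::field \<Rightarrow> 'b::ab_group_add \<Rightarrow> 'b) \<Rightarrow> nat \<Rightarrow> (nat \<Rightarrow> 'b set) \<Rightarrow> 'b set \<Rightarrow> bool" where
  "filt_compat_basis scale N M B \<longleftrightarrow>
     is_basis_of scale B (M N) \<and> (\<forall>t\<le>N. is_basis_of scale (B \<inter> M t) (M t))"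

definition fsupp :: "nat \<Rightarrow> (nat \<Rightarrow> 'b set) \<Rightarrow> 'b \<Rightarrow> nat set" where
  "fsupp N M m = {t. t \<le> N \<and> m \<in> M t}"

end

theory Submission
  imports Defs
begin

text \<open>A vector in the span of both X and Y has a unique coordinate vector with
  respect to the independent set X \<union> Y, which is then supported in X and in Y,
  hence in X \<inter> Y. Applied at every filtration level t to the bases B' \<inter> M' t and
  B'' \<inter> M'' t, this makes B' \<inter> B'' \<inter> M' t \<inter> M'' t a basis of M' t \<inter> M'' t.\<close>

lemma (in module) span_Int_span_eq_span_Int:
  assumes ind: "independent (X \<union> Y)"
  shows "span X \<inter> span Y = span (X \<inter> Y)"
proof
  show "span (X \<inter> Y) \<subseteq> span X \<inter> span Y"
    by (simp add: span_mono)
next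
  show "span X \<inter> span Y \<subseteq> span (X \<inter> Y)"
  proof
    fix v assume v: "v \<in> span X \<inter> span Y"
    let ?R = "representation (X \<union> Y) v"
    have "?R = representation X v" and "?R = representation Y v"
      using representation_extend[OF ind] v by auto
    then have supp: "{b. ?R b \<noteq> 0} \<subseteq> X \<inter> Y"
      using representation_ne_zero[of X v] representation_ne_zero[of Y v] by auto
    have "v \<in> span (X \<union> Y)"
      using v span_mono[of X "X \<union> Y"] by auto
    then have "v = (\<Sum>b | ?R b \<noteq> 0. ?R b *s b)"
      using sum_nonzero_representation_eq[OF ind] by simp
    also have "\<dots> \<in> span (X \<inter> Y)"
      using supp by (intro span_sum span_scale span_base) auto
    finally show "v \<in> span (X \<inter> Y)" .
  qed
qed

lemma is_basis_of_Int:
  fixes scale :: "'a::field \<Rightarrow> 'b::ab_group_add \<Rightarrow> 'b"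
  assumes "module scale"
    and "is_basis_of scale X S" and "is_basis_of scale Y T"
    and "\<not> module.dependent scale (X \<union> Y)"
  shows "is_basis_of scale (X \<inter> Y) (S \<inter> T)"
proof -
  interpret module scale by fact
  have "span (X \<inter> Y) = S \<inter> T"
    using assms(2,3) span_Int_span_eq_span_Int[OF assms(4)] by (simp add: is_basis_of_def)
  moreover have "independent (X \<inter> Y)"
    using assms(4) by (auto intro: dependent_mono)
  ultimately show ?thesis
    using assms(2,3) by (auto simp: is_basis_of_def)
qed

lemma filt_compat_basis_Int:
  fixes scale :: "'a::field \<Rightarrow> 'b::ab_group_add \<Rightarrow> 'b"
  assumes "module scale"
    and B': "filt_compat_basis scale N M' B'"
    and B'': "filt_compat_basis scale N M'' B''"
    and ind: "\<not> module.dependent scale (B' \<union> B'')"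
  shows "filt_compat_basis scale N (\<lambda>t. M' t \<inter> M'' t) (B' \<inter> B'')"
proof -
  have level: "is_basis_of scale (B' \<inter> B'' \<inter> (M' t \<inter> M'' t)) (M' t \<inter> M'' t)"
    if "t \<le> N" for t
  proof -
    have "is_basis_of scale ((B' \<inter> M' t) \<inter> (B'' \<inter> M'' t)) (M' t \<inter> M'' t)"
    proof (rule is_basis_of_Int[OF assms(1)])
      show "is_basis_of scale (B' \<inter> M' t) (M' t)" "is_basis_of scale (B'' \<inter> M'' t) (M'' t)"
        using B' B'' \<open>t \<le> N\<close> by (simp_all add: filt_compat_basis_def)
      show "\<not> module.dependent scale (B' \<inter> M' t \<union> B'' \<inter> M'' t)"
        using ind module.dependent_mono[OF assms(1)] by blast
    qed
    then show ?thesis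
      by (simp add: Int_ac)
  qed
  have "B' \<inter> B'' = B' \<inter> B'' \<inter> (M' N \<inter> M'' N)"
    using B' B'' by (auto simp: filt_compat_basis_def is_basis_of_def)
  then show ?thesis
    using level[of N] level by (simp add: filt_compat_basis_def)
qed

lemma fsupp_Int:
  "fsupp N (\<lambda>t. M' t \<inter> M'' t) m = fsupp N M' m \<inter> fsupp N M'' m"
  by (auto simp: fsupp_def)

theorem lemma2p6:
  fixes scale :: "'a::field \<Rightarrow> 'b::ab_group_add \<Rightarrow> 'b"
    and N :: nat
    and M M' M'' :: "nat \<Rightarrow> 'b set"
    and B' B'' :: "'b set"
  assumes "Vector_Spaces.vector_space scale"
    and "is_filtration scale N M"
    and "\<exists>B. finite B \<and> module.span scale B = M N"
    and "is_filtration scale N M'"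
    and "is_filtration scale N M''"
    and "\<forall>t\<le>N. M' t \<subseteq> M t \<and> M'' t \<subseteq> M t"
    and "filt_compat_basis scale N M' B'"
    and "filt_compat_basis scale N M'' B''"
    and "\<not> module.dependent scale (B' \<union> B'')"
  shows "filt_compat_basis scale N (\<lambda>t. M' t \<inter> M'' t) (B' \<inter> B'')
    \<and> (\<forall>m \<in> B' \<inter> B''. fsupp N (\<lambda>t. M' t \<inter> M'' t) m = fsupp N M' m \<inter> fsupp N M'' m)"
proof -
  have "module scale"
    using assms(1) by (simp add: vector_space_def module_def)
  then show ?thesis
    using filt_compat_basis_Int[OF _ assms(7-9)] by (simp add: fsupp_Int)
qed

end
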